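(* Let $G$ be a graph with an odd number $n$ of vertices and stubbornness levels $\alpha_x\in(0,1)$. Let $\mathcal{S}=(S,\overline{S})$ be a good bisection of $G$ and let $u$ be a good vertex of $\mathcal{S}$. Then $G$ admits a subvertable belief assignment $\mathbf{b}$ such that $u$ is a swing vertex for $\mathbf{b}$.
   Context: $G$ is a finite simple undirected graph, $N(x)$ the neighbors of $x$. For vertex sets $A,B$, $W(A,B)$ is the number of edges with one endpoint in $A$ and the other in $B$ (singletons written without braces). $a_x=\lfloor\alpha_x/(1-\alpha_x)\rfloor$. A bisection $\mathcal{S}=(S,\overline{S})$ is a partition of the vertex set with $|S|=\frac{n+1}{2}$, $|\overline{S}|=\frac{n-1}{2}$. The deficiency is $\mathrm{def}_{\mathcal{S}}(x)=W(x,S)-W(x,\overline{S})$ if $x\in S$ and $W(x,\overline{S})-W(x,S)$ if $x\in\overline{S}$. $\mathcal{S}$ is good if (1) $\mathrm{def}_{\mathcal{S}}(x)\ge -a_x$ for all $x\in S$, and (2) some $u\in S$ has $\mathrm{def}_{\mathcal{S}}(u)\ge a_u+1$; such vertices $u$ are the good vertices of $\mathcal{S}$. Game: belief assignment $\mathbf{b}\in\{0,1\}^n$, state $\mathbf{s}\in\{0,1\}^n$, cost $c_i(\mathbf{s})=\alpha_i|\mathbf{s}(i)-\mathbf{b}(i)|+(1-\alpha_i)\sum_{j\in N(i)}|\mathbf{s}(i)-\mathbf{s}(j)|$; truthful state $\mathbf{s}=\mathbf{b}$; a best response move changes one player's opinion to the other value when this strictly lowers its cost; an equilibrium is a state where no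 single player can strictly lower its cost by switching. $(\mathbf{s}_{-i},a)$ denotes $\mathbf{s}$ with coordinate $i$ replaced by $a$. $\mathbf{b}$ is subvertable if a majority of vertices have belief $0$ and some sequence of best response moves from the truthful state reaches an equilibrium with a majority of opinion $1$. For a subvertable $\mathbf{b}$ with exactly $\frac{n+1}{2}$ vertices of belief $0$, a vertex $u$ is a swing vertex if: $\mathbf{b}(u)=0$; $c_u(\mathbf{b})>c_u(\mathbf{b}')$ with $\mathbf{b}'=(\mathbf{b}_{-u},1)$; and for every $x$ with $\mathbf{b}(x)=1$, $c_x(\mathbf{b}')\le c_x((\mathbf{b}'_{-x},0))$. *)

theory Defs
  imports Complex_Main
begin

(* A finite simple undirected graph: finite vertex set V, symmetric irreflexive
   adjacency relation E living on V. Opinions/beliefs: True = 1, False = 0. *)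
definition simple_graph :: "'a set \<Rightarrow> ('a \<Rightarrow> 'a \<Rightarrow> bool) \<Rightarrow> bool" where
  "simple_graph V E \<longleftrightarrow> finite V \<and> (\<forall>x y. E x y \<longrightarrow> x \<in> V \<and> y \<in> V)
     \<and> (\<forall>x y. E x y \<longrightarrow> E y x) \<and> (\<forall>x. \<not> E x x)"

definition nbrs :: "'a set \<Rightarrow> ('a \<Rightarrow> 'a \<Rightarrow> bool) \<Rightarrow> 'a \<Rightarrow> 'a set" where
  "nbrs V E x = {y \<in> V. E x y}"

definition W :: "('a \<Rightarrow> 'a \<Rightarrow> bool) \<Rightarrow> 'a set \<Rightarrow> 'a set \<Rightarrow> nat" where
  "W E A B = card {{x, y} | x y. x \<in> A \<and> y \<in> B \<and> E x y}"

definition a_val :: "('a \<Rightarrow> real) \<Rightarrow> 'a \<Rightarrow> int" where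
  "a_val \<alpha> x = \<lfloor>\<alpha> x / (1 - \<alpha> x)\<rfloor>"

definition bisection :: "'a set \<Rightarrow> 'a set \<Rightarrow> bool" where
  "bisection V S \<longleftrightarrow> S \<subseteq> V \<and> card S = (card V + 1) div 2 \<and> card (V - S) = (card V - 1) div 2"

definition deficiency :: "'a set \<Rightarrow> ('a \<Rightarrow> 'a \<Rightarrow> bool) \<Rightarrow> 'a set \<Rightarrow> 'a \<Rightarrow> int" where
  "deficiency V E S x =
     (if x \<in> S then int (W E {x} S) - int (W E {x} (V - S))
      else int (W E {x} (V - S)) - int (W E {x} S))"

definition good_bisection :: "'a set \<Rightarrow> ('a \<Rightarrow> 'a \<Rightarrow> bool) \<Rightarrow> ('a \<Rightarrow> real) \<Rightarrow> 'a set \<Rightarrow> bool" where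
  "good_bisection V E \<alpha> S \<longleftrightarrow> bisection V S
     \<and> (\<forall>x\<in>S. deficiency V E S x \<ge> - a_val \<alpha> x)
     \<and> (\<exists>u\<in>S. deficiency V E S u \<ge> a_val \<alpha> u + 1)"

definition good_vertex :: "'a set \<Rightarrow> ('a \<Rightarrow> 'a \<Rightarrow> bool) \<Rightarrow> ('a \<Rightarrow> real) \<Rightarrow> 'a set \<Rightarrow> 'a \<Rightarrow> bool" where
  "good_vertex V E \<alpha> S u \<longleftrightarrow> good_bisection V E \<alpha> S \<and> u \<in> S \<and> deficiency V E S u \<ge> a_val \<alpha> u + 1"

definition cost :: "'a set \<Rightarrow> ('a \<Rightarrow> 'a \<Rightarrow> bool) \<Rightarrow> ('a \<Rightarrow> real) \<Rightarrow> ('a \<Rightarrow> bool) \<Rightarrow> 'a \<Rightarrow> ('a \<Rightarrow> bool) \<Rightarrow> real" where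
  "cost V E \<alpha> b i s = \<alpha> i * (if s i = b i then 0 else 1)
     + (1 - \<alpha> i) * real (card {j \<in> nbrs V E i. s i \<noteq> s j})"

definition br_move :: "'a set \<Rightarrow> ('a \<Rightarrow> 'a \<Rightarrow> bool) \<Rightarrow> ('a \<Rightarrow> real) \<Rightarrow> ('a \<Rightarrow> bool) \<Rightarrow> ('a \<Rightarrow> bool) \<Rightarrow> ('a \<Rightarrow> bool) \<Rightarrow> bool" where
  "br_move V E \<alpha> b s s' \<longleftrightarrow> (\<exists>i\<in>V. s' = s(i := \<not> s i) \<and> cost V E \<alpha> b i s' < cost V E \<alpha> b i s)"

definition equilibrium :: "'a set \<Rightarrow> ('a \<Rightarrow> 'a \<Rightarrow> bool) \<Rightarrow> ('a \<Rightarrow> real) \<Rightarrow> ('a \<Rightarrow> bool) \<Rightarrow> ('a \<Rightarrow> bool) \<Rightarrow> bool" where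
  "equilibrium V E \<alpha> b s \<longleftrightarrow> (\<forall>i\<in>V. \<not> cost V E \<alpha> b i (s(i := \<not> s i)) < cost V E \<alpha> b i s)"

definition subvertable :: "'a set \<Rightarrow> ('a \<Rightarrow> 'a \<Rightarrow> bool) \<Rightarrow> ('a \<Rightarrow> real) \<Rightarrow> ('a \<Rightarrow> bool) \<Rightarrow> bool" where
  "subvertable V E \<alpha> b \<longleftrightarrow> 2 * card {x \<in> V. \<not> b x} > card V
     \<and> (\<exists>s. (br_move V E \<alpha> b)\<^sup>*\<^sup>* b s \<and> equilibrium V E \<alpha> b s \<and> 2 * card {x \<in> V. s x} > card V)"

definition swing_vertex :: "'a set \<Rightarrow> ('a \<Rightarrow> 'a \<Rightarrow> bool) \<Rightarrow> ('a \<Rightarrow> real) \<Rightarrow> ('a \<Rightarrow> bool) \<Rightarrow> 'a \<Rightarrow> bool" where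
  "swing_vertex V E \<alpha> b u \<longleftrightarrow> subvertable V E \<alpha> b \<and> card {x \<in> V. \<not> b x} = (card V + 1) div 2
     \<and> u \<in> V \<and> \<not> b u
     \<and> cost V E \<alpha> b u b > cost V E \<alpha> b u (b(u := True))
     \<and> (\<forall>x\<in>V. b x \<longrightarrow> cost V E \<alpha> b x (b(u := True)) \<le> cost V E \<alpha> b x ((b(u := True))(x := False)))"

end

theory Submission
  imports Defs
begin

text \<open>Take the beliefs to be the indicator of \<open>S\<close> except that the good vertex \<open>u\<close> believes 0.
  Since \<open>u\<close> is good it strictly prefers to join \<open>S\<close>, after which the state is the indicator
  of \<open>S\<close>. Condition (1) of a good bisection says that in this state no player with opinion 1
  wants to switch to 0. That property is preserved by every best response, because only
  0-players can then move, each move raises one opinion to 1, and raising opinions only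
  makes other 1-players happier. Hence best-response dynamics terminates in an equilibrium
  in which all of \<open>S\<close>, a majority, still holds opinion 1.\<close>

definition ones_stable ::
  "'a set \<Rightarrow> ('a \<Rightarrow> 'a \<Rightarrow> bool) \<Rightarrow> ('a \<Rightarrow> real) \<Rightarrow> ('a \<Rightarrow> bool) \<Rightarrow> ('a \<Rightarrow> bool) \<Rightarrow> bool" where
  "ones_stable V E \<alpha> b s \<longleftrightarrow> (\<forall>i\<in>V. s i \<longrightarrow> cost V E \<alpha> b i s \<le> cost V E \<alpha> b i (s(i := False)))"

lemma a_val_less_iff:
  assumes "\<alpha> x < 1"
  shows "a_val \<alpha> x < d \<longleftrightarrow> \<alpha> x < (1 - \<alpha> x) * of_int d"
  using assms unfolding a_val_def by (simp add: floor_less_iff pos_divide_less_eq mult.commute)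

lemma le_a_val_iff:
  assumes "\<alpha> x < 1"
  shows "d \<le> a_val \<alpha> x \<longleftrightarrow> (1 - \<alpha> x) * of_int d \<le> \<alpha> x"
  using assms unfolding a_val_def by (simp add: le_floor_iff pos_le_divide_eq mult.commute)

lemma W_singleton_eq_card_nbrs:
  assumes "simple_graph V E"
  shows "W E {x} A = card {j \<in> nbrs V E x. j \<in> A}"
proof -
  have "{{x', y} | x' y. x' \<in> {x} \<and> y \<in> A \<and> E x' y} = (\<lambda>y. {x, y}) ` {j \<in> nbrs V E x. j \<in> A}"
    using assms unfolding simple_graph_def nbrs_def by auto
  moreover have "inj_on (\<lambda>y. {x, y}) {j \<in> nbrs V E x. j \<in> A}"
    using assms unfolding inj_on_def nbrs_def simple_graph_def by (auto simp: doubleton_eq_iff)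
  ultimately show ?thesis unfolding W_def by (simp add: card_image)
qed

lemma cost_upd_indicator:
  assumes "simple_graph V E"
  shows "cost V E \<alpha> b x ((\<lambda>y. y \<in> S)(x := v)) =
    \<alpha> x * (if v = b x then 0 else 1) + (1 - \<alpha> x) * real (if v then W E {x} (V - S) else W E {x} S)"
proof -
  have "{j \<in> nbrs V E x. ((\<lambda>y. y \<in> S)(x := v)) x \<noteq> ((\<lambda>y. y \<in> S)(x := v)) j}
      = (if v then {j \<in> nbrs V E x. j \<in> V - S} else {j \<in> nbrs V E x. j \<in> S})"
    using assms unfolding simple_graph_def nbrs_def by auto
  then show ?thesis
    unfolding cost_def W_singleton_eq_card_nbrs[OF assms] by simp
qed

lemma cost_raise_other_le:
  assumes "finite V" "\<alpha> k \<le> 1" "k \<noteq> i" "s k"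
  shows "cost V E \<alpha> b k (s(i := True)) \<le> cost V E \<alpha> b k s"
proof -
  have "card {j \<in> nbrs V E k. (s(i := True)) k \<noteq> (s(i := True)) j}
      \<le> card {j \<in> nbrs V E k. s k \<noteq> s j}"
    using assms by (intro card_mono) (auto simp: nbrs_def)
  then show ?thesis
    using assms unfolding cost_def by (simp add: mult_left_mono)
qed

lemma cost_raise_other_ge:
  assumes "finite V" "\<alpha> k \<le> 1" "k \<noteq> i" "\<not> s k"
  shows "cost V E \<alpha> b k s \<le> cost V E \<alpha> b k (s(i := True))"
proof -
  have "card {j \<in> nbrs V E k. s k \<noteq> s j}
      \<le> card {j \<in> nbrs V E k. (s(i := True)) k \<noteq> (s(i := True)) j}"
    using assms by (intro card_mono) (auto simp: nbrs_def)
  then show ?thesis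
    using assms unfolding cost_def by (simp add: mult_left_mono)
qed

lemma ones_stable_raise:
  assumes "finite V" "\<forall>x\<in>V. \<alpha> x \<le> 1" "ones_stable V E \<alpha> b s" "\<not> s i"
    and gain: "cost V E \<alpha> b i (s(i := True)) < cost V E \<alpha> b i s"
  shows "ones_stable V E \<alpha> b (s(i := True))"
  unfolding ones_stable_def
proof (intro ballI impI)
  fix k assume "k \<in> V" and "(s(i := True)) k"
  show "cost V E \<alpha> b k (s(i := True)) \<le> cost V E \<alpha> b k ((s(i := True))(k := False))"
  proof (cases "k = i")
    case True
    then show ?thesis using gain \<open>\<not> s i\<close> by (simp add: fun_upd_idem)
  next
    case False
    then have "s k" using \<open>(s(i := True)) k\<close> by simp
    have "cost V E \<alpha> b k (s(i := True)) \<le> cost V E \<alpha> b k s"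
      using assms \<open>k \<in> V\<close> False \<open>s k\<close> by (intro cost_raise_other_le) auto
    also have "\<dots> \<le> cost V E \<alpha> b k (s(k := False))"
      using assms(3) \<open>k \<in> V\<close> \<open>s k\<close> unfolding ones_stable_def by blast
    also have "\<dots> \<le> cost V E \<alpha> b k ((s(k := False))(i := True))"
      using assms \<open>k \<in> V\<close> False by (intro cost_raise_other_ge) auto
    finally show ?thesis using False by (simp add: fun_upd_twist)
  qed
qed

lemma ones_stable_reaches_equilibrium:
  assumes "finite V" "\<forall>x\<in>V. \<alpha> x \<le> 1" "ones_stable V E \<alpha> b s"
  shows "\<exists>t. (br_move V E \<alpha> b)\<^sup>*\<^sup>* s t \<and> equilibrium V E \<alpha> b t \<and> (\<forall>x. s x \<longrightarrow> t x)"
  using assms(3)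
proof (induction "card {x \<in> V. \<not> s x}" arbitrary: s rule: less_induct)
  case less
  show ?case
  proof (cases "equilibrium V E \<alpha> b s")
    case True
    then show ?thesis by blast
  next
    case False
    then obtain i where "i \<in> V" and gain: "cost V E \<alpha> b i (s(i := \<not> s i)) < cost V E \<alpha> b i s"
      unfolding equilibrium_def by blast
    have "\<not> s i"
      using less.prems \<open>i \<in> V\<close> gain unfolding ones_stable_def by force
    define s' where "s' = s(i := True)"
    have move: "br_move V E \<alpha> b s s'"
      unfolding br_move_def s'_def using \<open>i \<in> V\<close> gain \<open>\<not> s i\<close> by (intro bexI[of _ i]) auto
    have "ones_stable V E \<alpha> b s'"
      unfolding s'_def using assms(1,2) less.prems \<open>\<not> s i\<close> gain
      by (intro ones_stable_raise) auto
    moreover have "card {x \<in> V. \<not> s' x} < card {x \<in> V. \<not> s x}"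
    proof -
      have "{x \<in> V. \<not> s' x} = {x \<in> V. \<not> s x} - {i}" by (auto simp: s'_def)
      then show ?thesis
        using card_Diff1_less[of "{x \<in> V. \<not> s x}" i] assms(1) \<open>i \<in> V\<close> \<open>\<not> s i\<close> by simp
    qed
    ultimately obtain t where t: "(br_move V E \<alpha> b)\<^sup>*\<^sup>* s' t" "equilibrium V E \<alpha> b t" "\<forall>x. s' x \<longrightarrow> t x"
      using less.hyps by blast
    have "(br_move V E \<alpha> b)\<^sup>*\<^sup>* s t"
      using move t(1) by (rule converse_rtranclp_into_rtranclp)
    moreover have "\<forall>x. s x \<longrightarrow> t x"
      using t(3) by (simp add: s'_def)
    ultimately show ?thesis using t(2) by blast
  qed
qed

lemma good_vertex_gain:
  assumes "simple_graph V E" "\<alpha> u < 1" "good_vertex V E \<alpha> S u" "\<not> b u"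
  shows "cost V E \<alpha> b u (\<lambda>y. y \<in> S) < cost V E \<alpha> b u ((\<lambda>y. y \<in> S)(u := False))"
proof -
  have "u \<in> S" and "a_val \<alpha> u < int (W E {u} S) - int (W E {u} (V - S))"
    using assms(3) unfolding good_vertex_def deficiency_def by auto
  then have "\<alpha> u < (1 - \<alpha> u) * (real (W E {u} S) - real (W E {u} (V - S)))"
    using a_val_less_iff[of \<alpha> u, OF assms(2)] by simp
  then show ?thesis
    using cost_upd_indicator[OF assms(1), of \<alpha> b u S True]
      cost_upd_indicator[OF assms(1), of \<alpha> b u S False] assms(4) \<open>u \<in> S\<close>
    by (simp add: fun_upd_idem algebra_simps)
qed

lemma good_bisection_no_defection:
  assumes "simple_graph V E" "\<alpha> x < 1" "good_bisection V E \<alpha> S" "x \<in> S" "b x"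
  shows "cost V E \<alpha> b x (\<lambda>y. y \<in> S) \<le> cost V E \<alpha> b x ((\<lambda>y. y \<in> S)(x := False))"
proof -
  have "int (W E {x} (V - S)) - int (W E {x} S) \<le> a_val \<alpha> x"
    using assms(3,4) unfolding good_bisection_def deficiency_def by force
  then have "(1 - \<alpha> x) * (real (W E {x} (V - S)) - real (W E {x} S)) \<le> \<alpha> x"
    using le_a_val_iff[of \<alpha> x, OF assms(2)] by simp
  then show ?thesis
    using cost_upd_indicator[OF assms(1), of \<alpha> b x S True]
      cost_upd_indicator[OF assms(1), of \<alpha> b x S False] assms(4,5)
    by (simp add: fun_upd_idem algebra_simps)
qed

lemma ones_stable_indicator:
  assumes "simple_graph V E" "\<forall>x\<in>V. \<alpha> x < 1" "good_vertex V E \<alpha> S u"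
  shows "ones_stable V E \<alpha> ((\<lambda>y. y \<in> S)(u := False)) (\<lambda>y. y \<in> S)"
  unfolding ones_stable_def
proof (intro ballI impI)
  fix x assume "x \<in> V" "x \<in> S"
  then have "\<alpha> x < 1" using assms(2) by blast
  show "cost V E \<alpha> ((\<lambda>y. y \<in> S)(u := False)) x (\<lambda>y. y \<in> S)
      \<le> cost V E \<alpha> ((\<lambda>y. y \<in> S)(u := False)) x ((\<lambda>y. y \<in> S)(x := False))"
  proof (cases "x = u")
    case True
    then show ?thesis
      using good_vertex_gain[OF assms(1) _ assms(3), of "(\<lambda>y. y \<in> S)(u := False)"] \<open>\<alpha> x < 1\<close>
      by simp
  next
    case False
    have "good_bisection V E \<alpha> S" using assms(3) unfolding good_vertex_def by blast
    from good_bisection_no_defection[OF assms(1) \<open>\<alpha> x < 1\<close> this \<open>x \<in> S\<close>]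
    show ?thesis using False \<open>x \<in> S\<close> by simp
  qed
qed

lemma subvertable_if_flip_reaches_ones_stable:
  assumes "finite V" "\<forall>x\<in>V. \<alpha> x \<le> 1" "u \<in> V" "\<not> b u"
    and gain: "cost V E \<alpha> b u (b(u := True)) < cost V E \<alpha> b u b"
    and "ones_stable V E \<alpha> b (b(u := True))"
    and "card V < 2 * card {x \<in> V. \<not> b x}" "card V < 2 * card {x \<in> V. (b(u := True)) x}"
  shows "subvertable V E \<alpha> b"
proof -
  obtain t where t: "(br_move V E \<alpha> b)\<^sup>*\<^sup>* (b(u := True)) t" "equilibrium V E \<alpha> b t"
      "\<forall>x. (b(u := True)) x \<longrightarrow> t x"
    using ones_stable_reaches_equilibrium[OF assms(1,2,6)] by blast
  have "br_move V E \<alpha> b b (b(u := True))"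
    unfolding br_move_def using \<open>u \<in> V\<close> \<open>\<not> b u\<close> gain by (intro bexI[of _ u]) auto
  then have "(br_move V E \<alpha> b)\<^sup>*\<^sup>* b t"
    using t(1) by (rule converse_rtranclp_into_rtranclp)
  moreover have "card {x \<in> V. (b(u := True)) x} \<le> card {x \<in> V. t x}"
    using t(3) \<open>finite V\<close> by (intro card_mono) auto
  then have "card V < 2 * card {x \<in> V. t x}"
    using assms(8) by linarith
  ultimately show ?thesis
    unfolding subvertable_def using assms(7) t(2) by blast
qed

lemma bisection_card_bounds:
  assumes "finite V" "bisection V S" "odd (card V)" "u \<in> S"
  shows "card V < 2 * card S" "card (insert u (V - S)) = (card V + 1) div 2"
  using assms unfolding bisection_def by (simp_all add: card_insert_if) presburger+

theorem lemma1:
  fixes V :: "'a set" and E :: "'a \<Rightarrow> 'a \<Rightarrow> bool" and \<alpha> :: "'a \<Rightarrow> real"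
    and S :: "'a set" and u :: 'a
  assumes "simple_graph V E"
    and "odd (card V)"
    and "\<forall>x\<in>V. 0 < \<alpha> x \<and> \<alpha> x < 1"
    and "good_bisection V E \<alpha> S"
    and "good_vertex V E \<alpha> S u"
  shows "\<exists>b. subvertable V E \<alpha> b \<and> swing_vertex V E \<alpha> b u"
proof -
  have "finite V" and "S \<subseteq> V" and "u \<in> S" and bis: "bisection V S"
    using assms(1,5) unfolding simple_graph_def good_vertex_def good_bisection_def bisection_def
    by auto
  define b where "b = (\<lambda>y. y \<in> S)(u := False)"
  have "u \<in> V" "\<not> b u" and flip: "b(u := True) = (\<lambda>y. y \<in> S)"
    using \<open>u \<in> S\<close> \<open>S \<subseteq> V\<close> by (auto simp: b_def fun_eq_iff)
  have gain: "cost V E \<alpha> b u (b(u := True)) < cost V E \<alpha> b u b"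
    unfolding flip
    using good_vertex_gain[where b = b, OF assms(1) _ assms(5) \<open>\<not> b u\<close>] assms(3) \<open>u \<in> V\<close>
    by (simp add: b_def)
  have stable: "ones_stable V E \<alpha> b (b(u := True))"
    unfolding flip unfolding b_def using assms(3)
    by (intro ones_stable_indicator[OF assms(1) _ assms(5)]) auto
  have "{x \<in> V. \<not> b x} = insert u (V - S)"
    using \<open>u \<in> S\<close> \<open>S \<subseteq> V\<close> by (auto simp: b_def)
  then have zeros: "card {x \<in> V. \<not> b x} = (card V + 1) div 2"
    using bisection_card_bounds(2)[OF \<open>finite V\<close> bis assms(2) \<open>u \<in> S\<close>] by simp
  have "subvertable V E \<alpha> b"
  proof (rule subvertable_if_flip_reaches_ones_stable
      [OF \<open>finite V\<close> _ \<open>u \<in> V\<close> \<open>\<not> b u\<close> gain stable])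
    show "\<forall>x\<in>V. \<alpha> x \<le> 1" using assms(3) by (simp add: less_imp_le)
    show "card V < 2 * card {x \<in> V. \<not> b x}" using zeros assms(2) by presburger
    have "{x \<in> V. (b(u := True)) x} = S" using \<open>S \<subseteq> V\<close> by (auto simp: flip)
    then show "card V < 2 * card {x \<in> V. (b(u := True)) x}"
      using bisection_card_bounds(1)[OF \<open>finite V\<close> bis assms(2) \<open>u \<in> S\<close>] by simp
  qed
  moreover have "swing_vertex V E \<alpha> b u"
    unfolding swing_vertex_def
    using \<open>subvertable V E \<alpha> b\<close> zeros \<open>u \<in> V\<close> \<open>\<not> b u\<close> gain stable[unfolded ones_stable_def]
    by auto
  ultimately show ?thesis by blast
qed

end
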